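(* Let $K\ge 2$, $d_1\ge 1$, $d_k=2^{k-1}d_1$ for $k=1,\dots,K$, and $\sigma>0$. Let $x$ be a random vector in $\mathbb{R}^{d_K}$ with $\mathbb{E}|x|^2<\infty$, and set $x^{(K)}=x$ and $x^{(k-1)}=D_k(x^{(k)})$ for $k=K,\dots,2$. Direct model: let $x_0\sim\mathcal N(0,\sigma^2 I_{d_K})$ be independent of $x$, and define $$L_A=\mathbb{E}\big[|x-x_0|^2\big]=\mathbb{E}|x|^2+\mathbb{E}|x_0|^2 .$$ Cascaded model: let $x_0^{(1)}\sim\mathcal N(0,\sigma^2 I_{d_1})$ be independent of $x$. For $2\le k\le K$ let $$x_0^{(k)}=U_k\big(D_k(x^{(k)})\big)+\sigma_k\zeta_k,\qquad \sigma_k=2^{-(k-1)}\sigma,$$ where $\zeta_k\sim\mathcal N(0,I_{d_k})$ is independent of $x$. Define $$L_k=\mathbb{E}\big[|x^{(k)}-x_0^{(k)}|^2\big]\quad (1\le k\le K),\qquad L_B=\sum_{k=1}^K L_k .$$ Then $L_A>L_B$.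
   Context: $|\cdot|$ is the Euclidean norm. For $2\le k\le K$, fix a partition of the coordinate index set $\{1,\dots,d_k\}$ into $d_{k-1}$ disjoint blocks of size $2$. - The downsampling operator $D_k:\mathbb{R}^{d_k}\to\mathbb{R}^{d_{k-1}}$ sends $y$ to the vector whose $j$-th entry is the average of the entries of $y$ in the $j$-th block (neighborhood averaging). - The upsampling operator $U_k:\mathbb{R}^{d_{k-1}}\to\mathbb{R}^{d_k}$ sends $w$ to the vector whose entries in the $j$-th block all equal $w_j$ (neighborhood replication). For the linear interpolant $I_t=(1-t)x_0+tx_1$, the transport cost is $L=\int_0^1\mathbb{E}|\dot I_t|^2\,dt=\mathbb{E}|x_1-x_0|^2$. Accordingly, $L_A$ is the transport cost of a single-stage flow from Gaussian noise to $x$, and $L_k$ is the transport cost of stage $k$ of a cascade in which stage $k$ maps $x_0^{(k)}$ to $x^{(k)}$. *)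

theory Defs
  imports "HOL-Probability.Probability"
begin

text \<open>Vectors in R^n are represented as functions nat => real, only coordinates 0..n-1 matter.
  A partition of {0..<d_k} into blocks of size 2 is represented by a block-index map
  b : {0..<d_k} -> {0..<d_(k-1)} whose fibres all have exactly 2 elements.\<close>

definition dim :: "nat \<Rightarrow> nat \<Rightarrow> nat" where
  "dim d1 k = 2 ^ (k - 1) * d1"

definition sqnorm :: "nat \<Rightarrow> (nat \<Rightarrow> real) \<Rightarrow> real" where
  "sqnorm n v = (\<Sum>i<n. (v i)\<^sup>2)"

definition is_pair_partition :: "nat \<Rightarrow> nat \<Rightarrow> (nat \<Rightarrow> nat) \<Rightarrow> bool" where
  "is_pair_partition n m b \<longleftrightarrow> (\<forall>i<n. b i < m) \<and> (\<forall>j<m. card {i. i < n \<and> b i = j} = 2)"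

definition downs :: "(nat \<Rightarrow> nat) \<Rightarrow> nat \<Rightarrow> (nat \<Rightarrow> real) \<Rightarrow> (nat \<Rightarrow> real)" where
  "downs b n y = (\<lambda>j. (\<Sum>i\<in>{i. i < n \<and> b i = j}. y i) / 2)"

definition ups :: "(nat \<Rightarrow> nat) \<Rightarrow> (nat \<Rightarrow> real) \<Rightarrow> (nat \<Rightarrow> real)" where
  "ups b w = (\<lambda>i. w (b i))"

text \<open>levels blk d1 K m y = x^(K-m) when y = x^(K); blk k is the partition at level k.\<close>
primrec levels :: "(nat \<Rightarrow> nat \<Rightarrow> nat) \<Rightarrow> nat \<Rightarrow> nat \<Rightarrow> nat \<Rightarrow> (nat \<Rightarrow> real) \<Rightarrow> (nat \<Rightarrow> real)" where
  "levels blk d1 K 0 y = y"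
| "levels blk d1 K (Suc m) y = downs (blk (K - m)) (dim d1 (K - m)) (levels blk d1 K m y)"

definition level :: "(nat \<Rightarrow> nat \<Rightarrow> nat) \<Rightarrow> nat \<Rightarrow> nat \<Rightarrow> nat \<Rightarrow> (nat \<Rightarrow> real) \<Rightarrow> (nat \<Rightarrow> real)" where
  "level blk d1 K k y = levels blk d1 K (K - k) y"

definition rvec :: "'a measure \<Rightarrow> nat \<Rightarrow> ('a \<Rightarrow> nat \<Rightarrow> real) \<Rightarrow> bool" where
  "rvec M n X \<longleftrightarrow> (\<lambda>\<omega>. restrict (X \<omega>) {..<n}) \<in> M \<rightarrow>\<^sub>M PiM {..<n} (\<lambda>_. borel)"

definition gaussian_iso :: "'a measure \<Rightarrow> nat \<Rightarrow> real \<Rightarrow> ('a \<Rightarrow> nat \<Rightarrow> real) \<Rightarrow> bool" where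
  "gaussian_iso M n s X \<longleftrightarrow> rvec M n X \<and>
     distr M (PiM {..<n} (\<lambda>_. borel)) (\<lambda>\<omega>. restrict (X \<omega>) {..<n})
       = PiM {..<n} (\<lambda>_. density lborel (normal_density 0 s))"

definition indep_vec :: "'a measure \<Rightarrow> nat \<Rightarrow> ('a \<Rightarrow> nat \<Rightarrow> real) \<Rightarrow> nat \<Rightarrow> ('a \<Rightarrow> nat \<Rightarrow> real) \<Rightarrow> bool" where
  "indep_vec M n X m Y \<longleftrightarrow> prob_space.indep_var M
     (PiM {..<n} (\<lambda>_. borel)) (\<lambda>\<omega>. restrict (X \<omega>) {..<n})
     (PiM {..<m} (\<lambda>_. borel)) (\<lambda>\<omega>. restrict (Y \<omega>) {..<m})"

end

theory Submission
  imports Defs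
begin

(* Because the Gaussian noise is centred and independent of the data, every loss splits into a
   data part and a noise part: L_A = E|x|^2 + sigma^2 d_K, L_1 = E|x^(1)|^2 + sigma^2 d_1 and
   L_k = E|x^(k) - U_k D_k x^(k)|^2 + sigma_k^2 d_k.  As the blocks have size 2, Pythagoras gives
   |x^(k)|^2 = 2 |x^(k-1)|^2 + |x^(k) - U_k D_k x^(k)|^2, so the data parts of the cascade
   telescope to at most E|x|^2, while its noise parts add up to
   sigma^2 d_1 (2 - 2^(1-K)) < 2 sigma^2 d_1 <= sigma^2 d_K. *)

lemma sqnorm_cong: "(\<And>i. i < n \<Longrightarrow> f i = g i) \<Longrightarrow> sqnorm n f = sqnorm n g"
  unfolding sqnorm_def by (rule sum.cong) auto

lemma sqnorm_nonneg: "0 \<le> sqnorm n f"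
  unfolding sqnorm_def by (rule sum_nonneg) auto

lemma square_le_sqnorm: "i < n \<Longrightarrow> (f i)\<^sup>2 \<le> sqnorm n f"
  unfolding sqnorm_def by (rule member_le_sum) auto

lemma (in prob_space) gaussian_iso_component:
  assumes G: "gaussian_iso M n s Z" and i: "i < n" and s: "0 < s"
  shows "distributed M lborel (\<lambda>\<omega>. Z \<omega> i) (normal_density 0 s)"
proof -
  let ?Zr = "\<lambda>\<omega>. restrict (Z \<omega>) {..<n}"
  let ?N = "density lborel (normal_density 0 s)"
  have mZ: "?Zr \<in> M \<rightarrow>\<^sub>M PiM {..<n} (\<lambda>_. borel)"
    using G by (simp add: gaussian_iso_def rvec_def)
  have comp: "(\<lambda>v. v i) \<in> PiM {..<n} (\<lambda>_. borel) \<rightarrow>\<^sub>M (borel :: real measure)"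
    using i by (intro measurable_component_singleton) auto
  have eq: "(\<lambda>\<omega>. Z \<omega> i) = (\<lambda>v. v i) \<circ> ?Zr"
    using i by (auto simp: fun_eq_iff)
  have "distr M lborel (\<lambda>\<omega>. Z \<omega> i) = distr (distr M (PiM {..<n} (\<lambda>_. borel)) ?Zr) borel (\<lambda>v. v i)"
    unfolding eq distr_distr[OF comp mZ] by (rule distr_cong) auto
  also have "\<dots> = distr (PiM {..<n} (\<lambda>_. ?N)) ?N (\<lambda>v. v i)"
    using G by (auto simp: gaussian_iso_def intro: distr_cong)
  also have "\<dots> = ?N"
    using i by (intro distr_PiM_component) (auto intro: prob_space_normal_density[OF s])
  finally show ?thesis
    unfolding distributed_def eq using measurable_comp[OF mZ comp] by auto
qed

lemma (in prob_space) centered_normal_moments: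
  assumes s: "0 < s" and D: "distributed M lborel X (normal_density 0 s)"
  shows "integrable M X" "expectation X = 0"
    "integrable M (\<lambda>\<omega>. (X \<omega>)\<^sup>2)" "expectation (\<lambda>\<omega>. (X \<omega>)\<^sup>2) = s\<^sup>2"
proof -
  show "integrable M X"
    using distributed_integrable[OF D, of "\<lambda>x. x"] integrable_normal_moment[OF s, of 0 1] by simp
  show "integrable M (\<lambda>\<omega>. (X \<omega>)\<^sup>2)"
    using distributed_integrable[OF D, of "\<lambda>x. x\<^sup>2"] integrable_normal_moment[OF s, of 0 2] by simp
  show "expectation X = 0"
    by (rule normal_distributed_expectation[OF s D])
  then show "expectation (\<lambda>\<omega>. (X \<omega>)\<^sup>2) = s\<^sup>2"
    using normal_distributed_variance[OF s D] by simp
qed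

lemma (in prob_space) expectation_square_sub_indep_centered:
  fixes F Z :: "'a \<Rightarrow> real"
  assumes ind: "indep_var borel F borel Z"
    and F2: "integrable M (\<lambda>\<omega>. (F \<omega>)\<^sup>2)"
    and Z: "integrable M Z" "expectation Z = 0" and Z2: "integrable M (\<lambda>\<omega>. (Z \<omega>)\<^sup>2)"
  shows "integrable M (\<lambda>\<omega>. (F \<omega> - c * Z \<omega>)\<^sup>2)"
    "expectation (\<lambda>\<omega>. (F \<omega> - c * Z \<omega>)\<^sup>2)
       = expectation (\<lambda>\<omega>. (F \<omega>)\<^sup>2) + c\<^sup>2 * expectation (\<lambda>\<omega>. (Z \<omega>)\<^sup>2)"
proof -
  have F: "integrable M F"
    by (rule square_integrable_imp_integrable[OF indep_var_rv1[OF ind] F2])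
  have FZ: "integrable M (\<lambda>\<omega>. F \<omega> * Z \<omega>)" "expectation (\<lambda>\<omega>. F \<omega> * Z \<omega>) = 0"
    using indep_var_integrable[OF ind F Z(1)] indep_var_lebesgue_integral[OF ind F Z(1)] Z(2)
    by simp_all
  have expand: "(\<lambda>\<omega>. (F \<omega> - c * Z \<omega>)\<^sup>2)
      = (\<lambda>\<omega>. (F \<omega>)\<^sup>2 - 2 * c * (F \<omega> * Z \<omega>) + c\<^sup>2 * (Z \<omega>)\<^sup>2)"
    by (simp add: fun_eq_iff power2_eq_square algebra_simps)
  show "integrable M (\<lambda>\<omega>. (F \<omega> - c * Z \<omega>)\<^sup>2)"
    unfolding expand using F2 FZ Z2 by simp
  show "expectation (\<lambda>\<omega>. (F \<omega> - c * Z \<omega>)\<^sup>2)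
       = expectation (\<lambda>\<omega>. (F \<omega>)\<^sup>2) + c\<^sup>2 * expectation (\<lambda>\<omega>. (Z \<omega>)\<^sup>2)"
    unfolding expand using F2 FZ Z2 by simp
qed

lemma (in prob_space) integral_sqnorm_sub_indep_gaussian:
  assumes G: "gaussian_iso M n s Z" and s: "0 < s"
    and I: "indep_var MA A (PiM {..<n} (\<lambda>_. borel)) (\<lambda>\<omega>. restrict (Z \<omega>) {..<n})"
    and \<phi>: "\<And>i. i < n \<Longrightarrow> \<phi> i \<in> borel_measurable MA"
    and int: "integrable M (\<lambda>\<omega>. sqnorm n (\<lambda>i. \<phi> i (A \<omega>)))"
  shows "(\<integral>\<omega>. sqnorm n (\<lambda>i. \<phi> i (A \<omega>) - c * Z \<omega> i) \<partial>M)
       = (\<integral>\<omega>. sqnorm n (\<lambda>i. \<phi> i (A \<omega>)) \<partial>M) + c\<^sup>2 * s\<^sup>2 * real n"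
proof -
  have coord: "integrable M (\<lambda>\<omega>. (\<phi> i (A \<omega>))\<^sup>2)"
    "integrable M (\<lambda>\<omega>. (\<phi> i (A \<omega>) - c * Z \<omega> i)\<^sup>2)"
    "expectation (\<lambda>\<omega>. (\<phi> i (A \<omega>) - c * Z \<omega> i)\<^sup>2) = expectation (\<lambda>\<omega>. (\<phi> i (A \<omega>))\<^sup>2) + c\<^sup>2 * s\<^sup>2"
    if i: "i < n" for i
  proof -
    note Zi = centered_normal_moments[OF s gaussian_iso_component[OF G i s]]
    have comp: "(\<lambda>v. v i) \<in> PiM {..<n} (\<lambda>_. borel) \<rightarrow>\<^sub>M (borel :: real measure)"
      using i by (intro measurable_component_singleton) auto
    have "indep_var borel (\<phi> i \<circ> A) borel ((\<lambda>v. v i) \<circ> (\<lambda>\<omega>. restrict (Z \<omega>) {..<n}))"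
      by (rule indep_var_compose[OF I \<phi>[OF i] comp])
    then have ind: "indep_var borel (\<lambda>\<omega>. \<phi> i (A \<omega>)) borel (\<lambda>\<omega>. Z \<omega> i)"
      using i by (simp add: comp_def)
    show F2: "integrable M (\<lambda>\<omega>. (\<phi> i (A \<omega>))\<^sup>2)"
      using indep_var_rv1[OF ind] i square_le_sqnorm[of i n "\<lambda>i. \<phi> i (A _)"]
      by (intro Bochner_Integration.integrable_bound[OF int]) (auto intro!: AE_I2 simp: sqnorm_nonneg)
    show "integrable M (\<lambda>\<omega>. (\<phi> i (A \<omega>) - c * Z \<omega> i)\<^sup>2)"
      "expectation (\<lambda>\<omega>. (\<phi> i (A \<omega>) - c * Z \<omega> i)\<^sup>2) = expectation (\<lambda>\<omega>. (\<phi> i (A \<omega>))\<^sup>2) + c\<^sup>2 * s\<^sup>2"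
      using expectation_square_sub_indep_centered[OF ind F2 Zi(1,2,3)] Zi(4) by simp_all
  qed
  have "(\<integral>\<omega>. sqnorm n (\<lambda>i. \<phi> i (A \<omega>) - c * Z \<omega> i) \<partial>M)
      = (\<Sum>i<n. expectation (\<lambda>\<omega>. (\<phi> i (A \<omega>))\<^sup>2) + c\<^sup>2 * s\<^sup>2)"
    unfolding sqnorm_def by (subst Bochner_Integration.integral_sum) (auto simp: coord)
  also have "\<dots> = (\<integral>\<omega>. sqnorm n (\<lambda>i. \<phi> i (A \<omega>)) \<partial>M) + c\<^sup>2 * s\<^sup>2 * real n"
    unfolding sqnorm_def by (subst Bochner_Integration.integral_sum) (auto simp: coord sum.distrib)
  finally show ?thesis .
qed

lemma sqnorm_downs_ups_decomp:
  assumes P: "is_pair_partition n m b"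
  shows "sqnorm n y = 2 * sqnorm m (downs b n y) + sqnorm n (\<lambda>i. y i - ups b (downs b n y) i)"
proof -
  let ?B = "\<lambda>j. {i. i < n \<and> b i = j}"
  let ?D = "downs b n y"
  have group: "(\<Sum>i<n. h i) = (\<Sum>j<m. \<Sum>i\<in>?B j. h i)" for h :: "nat \<Rightarrow> real"
    using P unfolding is_pair_partition_def by (subst sum.group[symmetric]) auto
  have block: "(\<Sum>i\<in>?B j. (y i)\<^sup>2) = 2 * (?D j)\<^sup>2 + (\<Sum>i\<in>?B j. (y i - ups b ?D i)\<^sup>2)"
    if j: "j < m" for j
  proof -
    have "card (?B j) = 2" using P j unfolding is_pair_partition_def by auto
    then obtain p q where pq: "?B j = {p, q}" "p \<noteq> q" by (auto simp: card_2_iff)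
    then have b: "b p = j" "b q = j" and D: "?D j = (y p + y q) / 2"
      unfolding downs_def by auto
    show ?thesis
      using pq b unfolding D by (simp add: ups_def D power2_eq_square field_simps)
  qed
  have "sqnorm n y = (\<Sum>j<m. 2 * (?D j)\<^sup>2 + (\<Sum>i\<in>?B j. (y i - ups b ?D i)\<^sup>2))"
    unfolding sqnorm_def group by (rule sum.cong) (auto simp: block)
  also have "\<dots> = 2 * sqnorm m ?D + sqnorm n (\<lambda>i. y i - ups b ?D i)"
    unfolding sqnorm_def group by (simp add: sum.distrib sum_distrib_left)
  finally show ?thesis .
qed

lemma levels_restrict:
  "j < dim d1 (K - m) \<Longrightarrow> levels blk d1 K m (restrict y {..<dim d1 K}) j = levels blk d1 K m y j"
proof (induction m arbitrary: j)
  case (Suc m)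
  show ?case unfolding levels.simps downs_def
    by (intro arg_cong[where f="\<lambda>t. t / 2"] sum.cong) (auto simp: Suc.IH)
qed simp

lemma levels_measurable:
  "j < dim d1 (K - m) \<Longrightarrow>
    (\<lambda>v. levels blk d1 K m v j) \<in> borel_measurable (PiM {..<dim d1 K} (\<lambda>_. borel))"
proof (induction m arbitrary: j)
  case (Suc m)
  show ?case unfolding levels.simps downs_def
    by (intro borel_measurable_divide borel_measurable_sum Suc.IH measurable_const) auto
qed (simp add: measurable_component_singleton)

lemma level_restrict:
  "k \<le> K \<Longrightarrow> j < dim d1 k \<Longrightarrow> level blk d1 K k (restrict y {..<dim d1 K}) j = level blk d1 K k y j"
  unfolding level_def by (rule levels_restrict) simp

lemma level_measurable:
  "k \<le> K \<Longrightarrow> j < dim d1 k \<Longrightarrow>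
    (\<lambda>v. level blk d1 K k v j) \<in> borel_measurable (PiM {..<dim d1 K} (\<lambda>_. borel))"
  unfolding level_def by (rule levels_measurable) simp

lemma downs_level:
  assumes "2 \<le> k" "k \<le> K"
  shows "downs (blk k) (dim d1 k) (level blk d1 K k y) = level blk d1 K (k - 1) y"
proof -
  have "K - (k - 1) = Suc (K - k)" "K - (K - k) = k" using assms by auto
  then show ?thesis unfolding level_def by simp
qed

lemma telescope_doubling_le:
  fixes a :: "nat \<Rightarrow> real"
  assumes "\<And>k. 0 \<le> a k" "1 \<le> K"
  shows "a 1 + (\<Sum>k\<in>{2..K}. a k - 2 * a (k - 1)) \<le> a K"
  using assms(2)
proof (induction K rule: dec_induct)
  case (step K)
  have "{2..Suc K} = insert (Suc K) {2..K}" using step by auto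
  then show ?case using step.IH assms(1)[of K] by simp
qed simp

lemma sum_half_powers:
  "1 \<le> K \<Longrightarrow> (\<Sum>k\<in>{2..K}. (1/2::real) ^ (k - 1)) = 1 - (1/2) ^ (K - 1)"
proof (induction K rule: dec_induct)
  case (step K)
  have "{2..Suc K} = insert (Suc K) {2..K}" using step by auto
  then show ?case using step by (cases K) (auto simp: field_simps)
qed simp

lemma cascade_noise_lt:
  fixes \<sigma> :: real
  assumes "2 \<le> K" "1 \<le> d1" "0 < \<sigma>"
  shows "\<sigma>\<^sup>2 * real d1 + (\<Sum>k\<in>{2..K}. (2 powr (- real (k - 1)) * \<sigma>)\<^sup>2 * real (dim d1 k))
    < \<sigma>\<^sup>2 * real (dim d1 K)"
proof -
  have stage_noise: "(2 powr (- real (k - 1)) * \<sigma>)\<^sup>2 * real (dim d1 k) = \<sigma>\<^sup>2 * real d1 * (1/2) ^ (k - 1)"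
    for k :: nat
    by (simp add: dim_def powr_minus powr_realpow power_mult_distrib power_one_over
        power2_eq_square field_simps)
  have "\<sigma>\<^sup>2 * real d1 + (\<Sum>k\<in>{2..K}. (2 powr (- real (k - 1)) * \<sigma>)\<^sup>2 * real (dim d1 k))
      = \<sigma>\<^sup>2 * real d1 * (2 - (1/2) ^ (K - 1))"
    using assms(1) by (simp only: stage_noise sum_distrib_left[symmetric] sum_half_powers) (simp add: algebra_simps)
  also have "\<dots> < \<sigma>\<^sup>2 * real d1 * 2"
    using assms by (intro mult_strict_left_mono) auto
  also have "\<dots> \<le> \<sigma>\<^sup>2 * real d1 * 2 ^ (K - 1)"
    using assms power_increasing[of 1 "K - 1" "2::real"] by (intro mult_left_mono) auto
  finally show ?thesis by (simp add: dim_def mult_ac)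
qed

locale cascade = prob_space M
  for M :: "'a measure" and K d1 :: nat and blk :: "nat \<Rightarrow> nat \<Rightarrow> nat"
    and x :: "'a \<Rightarrow> nat \<Rightarrow> real" +
  assumes one_le_K: "1 \<le> K"
    and pair_partition: "k \<in> {2..K} \<Longrightarrow> is_pair_partition (dim d1 k) (dim d1 (k - 1)) (blk k)"
    and rvec_x: "rvec M (dim d1 K) x"
    and integrable_sqnorm_x: "integrable M (\<lambda>\<omega>. sqnorm (dim d1 K) (x \<omega>))"
begin

definition energy :: "nat \<Rightarrow> 'a \<Rightarrow> real" where
  "energy k \<omega> = sqnorm (dim d1 k) (level blk d1 K k (x \<omega>))"

definition detail_energy :: "nat \<Rightarrow> 'a \<Rightarrow> real" where
  "detail_energy k \<omega> = sqnorm (dim d1 k) (\<lambda>i. level blk d1 K k (x \<omega>) i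
     - ups (blk k) (downs (blk k) (dim d1 k) (level blk d1 K k (x \<omega>))) i)"

lemma ups_downs_level:
  "k \<in> {2..K} \<Longrightarrow>
    ups (blk k) (downs (blk k) (dim d1 k) (level blk d1 K k y)) i = level blk d1 K (k - 1) y (blk k i)"
  by (simp add: ups_def downs_level)

lemma blk_less: "k \<in> {2..K} \<Longrightarrow> i < dim d1 k \<Longrightarrow> blk k i < dim d1 (k - 1)"
  using pair_partition by (auto simp: is_pair_partition_def)

lemma detail_energy_eq: "k \<in> {2..K} \<Longrightarrow> detail_energy k \<omega> = energy k \<omega> - 2 * energy (k - 1) \<omega>"
  using sqnorm_downs_ups_decomp[OF pair_partition, of k "level blk d1 K k (x \<omega>)"]
  unfolding energy_def detail_energy_def by (simp add: downs_level)

lemma energy_le_energy_top: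
  assumes "1 \<le> k" "k \<le> K"
  shows "energy k \<omega> \<le> energy K \<omega>"
  using assms(2)
proof (induction k rule: inc_induct)
  case (step n)
  have "0 \<le> detail_energy (Suc n) \<omega>" "0 \<le> energy n \<omega>"
    by (simp_all add: detail_energy_def energy_def sqnorm_nonneg)
  then show ?case using assms(1) step detail_energy_eq[of "Suc n" \<omega>] by simp
qed simp

lemma level_x_measurable:
  assumes "k \<le> K" "j < dim d1 k"
  shows "(\<lambda>\<omega>. level blk d1 K k (x \<omega>) j) \<in> borel_measurable M"
proof -
  have "(\<lambda>\<omega>. level blk d1 K k (x \<omega>) j) = (\<lambda>v. level blk d1 K k v j) \<circ> (\<lambda>\<omega>. restrict (x \<omega>) {..<dim d1 K})"
    using assms by (simp add: comp_def level_restrict)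
  then show ?thesis
    using measurable_comp rvec_x level_measurable[OF assms] by (metis rvec_def)
qed

lemma integrable_energy: "1 \<le> k \<Longrightarrow> k \<le> K \<Longrightarrow> integrable M (energy k)"
proof (rule Bochner_Integration.integrable_bound[OF integrable_sqnorm_x])
  assume "k \<le> K"
  then show "energy k \<in> borel_measurable M"
    unfolding energy_def[abs_def] sqnorm_def by (intro borel_measurable_sum borel_measurable_power level_x_measurable) auto
next
  assume "1 \<le> k" "k \<le> K"
  then show "AE \<omega> in M. norm (energy k \<omega>) \<le> norm (sqnorm (dim d1 K) (x \<omega>))"
    using energy_le_energy_top by (auto simp: energy_def level_def sqnorm_nonneg)
qed

lemma integral_detail_energy:
  assumes "k \<in> {2..K}"
  shows "integrable M (detail_energy k)"
    "(\<integral>\<omega>. detail_energy k \<omega> \<partial>M) = (\<integral>\<omega>. energy k \<omega> \<partial>M) - 2 * (\<integral>\<omega>. energy (k - 1) \<omega> \<partial>M)"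
proof -
  have "integrable M (energy k)" "integrable M (energy (k - 1))"
    using assms by (auto intro: integrable_energy)
  moreover have "detail_energy k = (\<lambda>\<omega>. energy k \<omega> - 2 * energy (k - 1) \<omega>)"
    using assms by (simp add: fun_eq_iff detail_energy_eq)
  ultimately show "integrable M (detail_energy k)"
    "(\<integral>\<omega>. detail_energy k \<omega> \<partial>M) = (\<integral>\<omega>. energy k \<omega> \<partial>M) - 2 * (\<integral>\<omega>. energy (k - 1) \<omega> \<partial>M)"
    by simp_all
qed

lemma integral_energy_telescope_le:
  "(\<integral>\<omega>. energy 1 \<omega> \<partial>M) + (\<Sum>k\<in>{2..K}. \<integral>\<omega>. detail_energy k \<omega> \<partial>M) \<le> (\<integral>\<omega>. energy K \<omega> \<partial>M)"
  using telescope_doubling_le[of "\<lambda>k. \<integral>\<omega>. energy k \<omega> \<partial>M", OF _ one_le_K]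
  by (simp add: integral_detail_energy energy_def sqnorm_nonneg)

(* Independence is only assumed for the restriction of x to its first dim d1 K coordinates,
   so the features phi i must factor through that restriction. *)
lemma integral_sqnorm_sub_indep_gaussian_x:
  assumes G: "gaussian_iso M n s Z" and s: "0 < s" and I: "indep_vec M (dim d1 K) x n Z"
    and \<phi>: "\<And>i. i < n \<Longrightarrow> \<phi> i \<in> borel_measurable (PiM {..<dim d1 K} (\<lambda>_. borel))"
    and \<phi>_restrict: "\<And>i y. i < n \<Longrightarrow> \<phi> i (restrict y {..<dim d1 K}) = \<phi> i y"
    and int: "integrable M (\<lambda>\<omega>. sqnorm n (\<lambda>i. \<phi> i (x \<omega>)))"
  shows "(\<integral>\<omega>. sqnorm n (\<lambda>i. \<phi> i (x \<omega>) - c * Z \<omega> i) \<partial>M)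
       = (\<integral>\<omega>. sqnorm n (\<lambda>i. \<phi> i (x \<omega>)) \<partial>M) + c\<^sup>2 * s\<^sup>2 * real n"
proof -
  have eq: "sqnorm n (\<lambda>i. \<phi> i (restrict (x \<omega>) {..<dim d1 K}) - c' * Z \<omega> i)
      = sqnorm n (\<lambda>i. \<phi> i (x \<omega>) - c' * Z \<omega> i)" for \<omega> c'
    by (rule sqnorm_cong) (simp add: \<phi>_restrict)
  have "(\<integral>\<omega>. sqnorm n (\<lambda>i. \<phi> i (restrict (x \<omega>) {..<dim d1 K}) - c * Z \<omega> i) \<partial>M)
      = (\<integral>\<omega>. sqnorm n (\<lambda>i. \<phi> i (restrict (x \<omega>) {..<dim d1 K})) \<partial>M) + c\<^sup>2 * s\<^sup>2 * real n"
    using I int eq[of _ 0] by (intro integral_sqnorm_sub_indep_gaussian[OF G s _ \<phi>])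
      (simp_all add: indep_vec_def)
  then show ?thesis
    using eq[of _ 0] by (simp add: eq)
qed

lemma integral_direct_loss:
  assumes "gaussian_iso M (dim d1 K) s x0" "0 < s" "indep_vec M (dim d1 K) x (dim d1 K) x0"
  shows "(\<integral>\<omega>. sqnorm (dim d1 K) (\<lambda>i. x \<omega> i - x0 \<omega> i) \<partial>M)
       = (\<integral>\<omega>. energy K \<omega> \<partial>M) + s\<^sup>2 * real (dim d1 K)"
  using integral_sqnorm_sub_indep_gaussian_x[OF assms, where \<phi> = "\<lambda>i y. y i" and c = 1]
  by (simp add: energy_def level_def measurable_component_singleton integrable_sqnorm_x)

lemma integral_coarse_loss:
  assumes "gaussian_iso M d1 s x01" "0 < s" "indep_vec M (dim d1 K) x d1 x01"
  shows "(\<integral>\<omega>. sqnorm d1 (\<lambda>i. level blk d1 K 1 (x \<omega>) i - x01 \<omega> i) \<partial>M)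
       = (\<integral>\<omega>. energy 1 \<omega> \<partial>M) + s\<^sup>2 * real d1"
proof -
  have dim_1: "dim d1 (Suc 0) = d1" by (simp add: dim_def)
  show ?thesis
    using integral_sqnorm_sub_indep_gaussian_x[OF assms, where \<phi> = "\<lambda>i y. level blk d1 K 1 y i" and c = 1]
      level_measurable[of 1 K _ d1 blk] level_restrict[of 1 K _ d1 blk] integrable_energy[of 1] one_le_K
    by (simp add: energy_def[abs_def] dim_1)
qed

lemma integral_stage_loss:
  assumes k: "k \<in> {2..K}"
    and "gaussian_iso M (dim d1 k) 1 \<zeta>" "indep_vec M (dim d1 K) x (dim d1 k) \<zeta>"
  shows "(\<integral>\<omega>. sqnorm (dim d1 k) (\<lambda>i. level blk d1 K k (x \<omega>) i
             - (ups (blk k) (downs (blk k) (dim d1 k) (level blk d1 K k (x \<omega>))) i + c * \<zeta> \<omega> i)) \<partial>M)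
       = (\<integral>\<omega>. detail_energy k \<omega> \<partial>M) + c\<^sup>2 * real (dim d1 k)"
proof -
  let ?\<phi> = "\<lambda>i y. level blk d1 K k y i - level blk d1 K (k - 1) y (blk k i)"
  have "(\<integral>\<omega>. sqnorm (dim d1 k) (\<lambda>i. ?\<phi> i (x \<omega>) - c * \<zeta> \<omega> i) \<partial>M)
      = (\<integral>\<omega>. sqnorm (dim d1 k) (\<lambda>i. ?\<phi> i (x \<omega>)) \<partial>M) + c\<^sup>2 * 1\<^sup>2 * real (dim d1 k)"
  proof (rule integral_sqnorm_sub_indep_gaussian_x[OF assms(2) _ assms(3)])
    fix i assume i: "i < dim d1 k"
    then show "?\<phi> i \<in> borel_measurable (PiM {..<dim d1 K} (\<lambda>_. borel))"
      using k blk_less by (intro borel_measurable_diff level_measurable) auto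
    show "?\<phi> i (restrict y {..<dim d1 K}) = ?\<phi> i y" for y
    proof -
      have "k - 1 \<le> K" "k \<le> K" using k by auto
      then show ?thesis
        using i blk_less[OF k i] by (simp add: level_restrict)
    qed
  next
    show "integrable M (\<lambda>\<omega>. sqnorm (dim d1 k) (\<lambda>i. ?\<phi> i (x \<omega>)))"
      using integral_detail_energy(1)[OF k] k
      by (simp add: detail_energy_def[abs_def] ups_downs_level)
  qed simp
  then show ?thesis
    using k by (simp add: detail_energy_def ups_downs_level diff_diff_eq)
qed

end

theorem theorem1:
  fixes M :: "'a measure" and K d1 :: nat and \<sigma> :: real
    and blk :: "nat \<Rightarrow> nat \<Rightarrow> nat"
    and x x0 x01 :: "'a \<Rightarrow> nat \<Rightarrow> real" and \<zeta> :: "nat \<Rightarrow> 'a \<Rightarrow> nat \<Rightarrow> real"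
  assumes "prob_space M"
    and "K \<ge> 2" and "d1 \<ge> 1" and "\<sigma> > 0"
    and "\<forall>k\<in>{2..K}. is_pair_partition (dim d1 k) (dim d1 (k - 1)) (blk k)"
    and "rvec M (dim d1 K) x"
    and "integrable M (\<lambda>\<omega>. sqnorm (dim d1 K) (x \<omega>))"
    and "gaussian_iso M (dim d1 K) \<sigma> x0"
    and "indep_vec M (dim d1 K) x (dim d1 K) x0"
    and "gaussian_iso M d1 \<sigma> x01"
    and "indep_vec M (dim d1 K) x d1 x01"
    and "\<forall>k\<in>{2..K}. gaussian_iso M (dim d1 k) 1 (\<zeta> k)"
    and "\<forall>k\<in>{2..K}. indep_vec M (dim d1 K) x (dim d1 k) (\<zeta> k)"
  shows "(\<integral>\<omega>. sqnorm (dim d1 K) (\<lambda>i. x \<omega> i - x0 \<omega> i) \<partial>M) >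
         (\<integral>\<omega>. sqnorm d1 (\<lambda>i. level blk d1 K 1 (x \<omega>) i - x01 \<omega> i) \<partial>M)
         + (\<Sum>k\<in>{2..K}. \<integral>\<omega>. sqnorm (dim d1 k)
              (\<lambda>i. level blk d1 K k (x \<omega>) i
                   - (ups (blk k) (downs (blk k) (dim d1 k) (level blk d1 K k (x \<omega>))) i
                      + (2 powr (- real (k - 1)) * \<sigma>) * \<zeta> k \<omega> i)) \<partial>M)"
proof -
  interpret cascade M K d1 blk x
    using assms(1-7) by (intro cascade.intro cascade_axioms.intro) auto
  let ?c = "\<lambda>k. 2 powr (- real (k - 1)) * \<sigma>"
  have stages: "(\<Sum>k\<in>{2..K}. \<integral>\<omega>. sqnorm (dim d1 k)
              (\<lambda>i. level blk d1 K k (x \<omega>) i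
                   - (ups (blk k) (downs (blk k) (dim d1 k) (level blk d1 K k (x \<omega>))) i
                      + ?c k * \<zeta> k \<omega> i)) \<partial>M)
      = (\<Sum>k\<in>{2..K}. \<integral>\<omega>. detail_energy k \<omega> \<partial>M) + (\<Sum>k\<in>{2..K}. (?c k)\<^sup>2 * real (dim d1 k))"
    unfolding sum.distrib[symmetric] using assms(12,13)
    by (intro sum.cong refl integral_stage_loss) auto
  have "(\<integral>\<omega>. energy 1 \<omega> \<partial>M) + \<sigma>\<^sup>2 * real d1
      + ((\<Sum>k\<in>{2..K}. \<integral>\<omega>. detail_energy k \<omega> \<partial>M) + (\<Sum>k\<in>{2..K}. (?c k)\<^sup>2 * real (dim d1 k)))
      < (\<integral>\<omega>. energy K \<omega> \<partial>M) + \<sigma>\<^sup>2 * real (dim d1 K)"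
    using integral_energy_telescope_le cascade_noise_lt[OF assms(2,3,4)] by linarith
  then show ?thesis
    unfolding stages integral_coarse_loss[OF assms(10,4,11)] integral_direct_loss[OF assms(8,4,9)] .
qed

end
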